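(* Suppose $(\alpha_0,\dots,\alpha_4)\in\mathbb{R}^5$ satisfies $0\le\alpha_i\le1$ for all $i$ and $\sum_i\alpha_i=1$. If $A_4(\alpha_0,\dots,\alpha_4)$ has a rational solution $(f_0,\dots,f_4)$, then $h_{\infty,-1}\ge0$, where $h_{\infty,-1}$ is the coefficient of $t^{-1}$ in the Laurent expansion at $t=\infty$ of $\hat H=f_0f_1f_2+f_1f_2f_3+f_2f_3f_4+f_3f_4f_0+f_4f_0f_1$.
   Context: The $A_4^{(1)}$ Painlevé equation $A_4(\alpha_0,\dots,\alpha_4)$ is the system for five functions $f_0,\dots,f_4$ of $t$ (indices in $\mathbb{Z}/5\mathbb{Z}$, ${}'=d/dt$): $f_j'=f_j(f_{j+1}-f_{j+2}+f_{j+3}-f_{j+4})+\alpha_j$ ($j=0,\dots,4$), $f_0+\dots+f_4=t$. A rational solution is a tuple of rational functions satisfying it. *)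

theory Defs
  imports "HOL-Analysis.Analysis" "HOL-Computational_Algebra.Polynomial"
begin

definition rational_fun :: "(complex \<Rightarrow> complex) \<Rightarrow> bool" where
  "rational_fun f \<longleftrightarrow> (\<exists>p q. q \<noteq> 0 \<and> (\<forall>t. poly q t \<noteq> 0 \<longrightarrow> f t = poly p t / poly q t))"

definition A4_rational_solution :: "(nat \<Rightarrow> real) \<Rightarrow> (nat \<Rightarrow> complex \<Rightarrow> complex) \<Rightarrow> bool" where
  "A4_rational_solution \<alpha> f \<longleftrightarrow>
     (\<forall>j<5. rational_fun (f j)) \<and>
     (\<exists>F. finite F \<and> (\<forall>t. t \<notin> F \<longrightarrow>
        (\<forall>j<5. (f j has_field_derivative
            (f j t * (f ((j+1) mod 5) t - f ((j+2) mod 5) t + f ((j+3) mod 5) t - f ((j+4) mod 5) t)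
             + complex_of_real (\<alpha> j))) (at t)) \<and>
        (\<Sum>j<5. f j t) = t))"

definition A4_H :: "(nat \<Rightarrow> complex \<Rightarrow> complex) \<Rightarrow> complex \<Rightarrow> complex" where
  "A4_H f t = (\<Sum>j<5. f j t * f ((j+1) mod 5) t * f ((j+2) mod 5) t)"

text \<open>Coefficient of t^(-1) in the Laurent expansion at infinity of a rational function R:
  R(t) = P(t) + c/t + O(t^(-2)) with P polynomial (the polynomial part), so c is the unique
  limit of t (R t - P t) as t tends to infinity.\<close>
definition laurent_inf_coeff_m1 :: "(complex \<Rightarrow> complex) \<Rightarrow> complex" where
  "laurent_inf_coeff_m1 R = (THE c. \<exists>p. ((\<lambda>t. t * (R t - poly p t)) \<longlongrightarrow> c) at_infinity)"

end

theory Submission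
  imports Defs "HOL-Complex_Analysis.Complex_Analysis"
begin

text \<open>
  If the lowest-order Laurent coefficients of the f_j at a pole had order below -1, they would
  solve a homogeneous quadratic system whose only solution is zero; so all f_j have at most
  simple poles. Comparing t^(-2) coefficients, the residues r_j satisfy
  r_j (1 + r_(j+1) - r_(j+2) + r_(j+3) - r_(j+4)) = 0 and r_0 + ... + r_4 = 0, a system with
  finitely many solutions on which every partial derivative dH/df_j takes a value in
  {0, -1, -3}. Along solutions H' = sum_j alpha_j dH/df_j, so the residue of H at each pole is
  -sum_j alpha_j dH/df_j(r) >= 0. Finally, integrating H over a large circle identifies the
  coefficient of t^(-1) at infinity with the sum of the finite residues.
\<close>

definition A4_alt_sum :: "(nat \<Rightarrow> 'a::comm_ring_1) \<Rightarrow> nat \<Rightarrow> 'a" where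
  "A4_alt_sum y j = y ((j+1) mod 5) - y ((j+2) mod 5) + y ((j+3) mod 5) - y ((j+4) mod 5)"

definition A4_hamiltonian :: "(nat \<Rightarrow> 'a::comm_ring_1) \<Rightarrow> 'a" where
  "A4_hamiltonian y = (\<Sum>j<5. y j * y ((j+1) mod 5) * y ((j+2) mod 5))"

definition A4_hamiltonian_partial :: "(nat \<Rightarrow> 'a::comm_ring_1) \<Rightarrow> nat \<Rightarrow> 'a" where
  "A4_hamiltonian_partial y j =
     y ((j+1) mod 5) * y ((j+2) mod 5) + y ((j+1) mod 5) * y ((j+4) mod 5)
     + y ((j+3) mod 5) * y ((j+4) mod 5)"

lemma sum_lessThan_5: "(\<Sum>j<5. g j) = g 0 + g 1 + g 2 + g 3 + g 4"
  for g :: "nat \<Rightarrow> 'a::comm_monoid_add"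
  by (simp add: eval_nat_numeral add_ac)

lemma less_5_cases:
  assumes "j < (5::nat)"
  obtains "j = 0" | "j = 1" | "j = 2" | "j = 3" | "j = 4"
  using assms by linarith

lemma A4_alt_sum_simps:
  "A4_alt_sum y 0 = y 1 - y 2 + y 3 - y 4" "A4_alt_sum y 1 = y 2 - y 3 + y 4 - y 0"
  "A4_alt_sum y 2 = y 3 - y 4 + y 0 - y 1" "A4_alt_sum y 3 = y 4 - y 0 + y 1 - y 2"
  "A4_alt_sum y 4 = y 0 - y 1 + y 2 - y 3"
  by (simp_all add: A4_alt_sum_def numeral_2_eq_2)

lemma A4_hamiltonian_partial_simps:
  "A4_hamiltonian_partial y 0 = y 1 * y 2 + y 1 * y 4 + y 3 * y 4"
  "A4_hamiltonian_partial y 1 = y 2 * y 3 + y 2 * y 0 + y 4 * y 0"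
  "A4_hamiltonian_partial y 2 = y 3 * y 4 + y 3 * y 1 + y 0 * y 1"
  "A4_hamiltonian_partial y 3 = y 4 * y 0 + y 4 * y 2 + y 1 * y 2"
  "A4_hamiltonian_partial y 4 = y 0 * y 1 + y 0 * y 3 + y 2 * y 3"
  by (simp_all add: A4_hamiltonian_partial_def numeral_2_eq_2)

lemma A4_leading_coeffs_eq_0:
  fixes u :: "nat \<Rightarrow> 'a::field_char_0"
  assumes "\<forall>i<5. u i * A4_alt_sum u i = 0" and "(\<Sum>i<5. u i) = 0" and "j < 5"
  shows "u j = 0"
proof -
  have "u 0 * A4_alt_sum u 0 = 0" "u 1 * A4_alt_sum u 1 = 0" "u 2 * A4_alt_sum u 2 = 0"
    "u 3 * A4_alt_sum u 3 = 0" "u 4 * A4_alt_sum u 4 = 0"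
    by (rule assms(1)[rule_format]; simp)+
  moreover have "u 0 + u 1 + u 2 + u 3 + u 4 = 0"
    using assms(2) by (simp add: sum_lessThan_5)
  ultimately have "u 0 = 0" "u 1 = 0" "u 2 = 0" "u 3 = 0" "u 4 = 0"
    unfolding A4_alt_sum_simps by algebra+
  with \<open>j < 5\<close> show ?thesis
    by (elim less_5_cases) simp_all
qed

lemma A4_hamiltonian_partial_values:
  fixes r :: "nat \<Rightarrow> 'a::field_char_0"
  assumes "\<forall>i<5. r i * (1 + A4_alt_sum r i) = 0" and "(\<Sum>i<5. r i) = 0" and "j < 5"
  shows "A4_hamiltonian_partial r j \<in> {0, -1, -3}"
proof -
  have "r 0 * (1 + A4_alt_sum r 0) = 0" "r 1 * (1 + A4_alt_sum r 1) = 0"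
    "r 2 * (1 + A4_alt_sum r 2) = 0" "r 3 * (1 + A4_alt_sum r 3) = 0"
    "r 4 * (1 + A4_alt_sum r 4) = 0"
    by (rule assms(1)[rule_format]; simp)+
  moreover have "r 0 + r 1 + r 2 + r 3 + r 4 = 0"
    using assms(2) by (simp add: sum_lessThan_5)
  \<comment> \<open>the system has sixteen solutions, all integral; \<open>algebra\<close> finds the Nullstellensatz
    certificate showing that each \<open>\<partial>H/\<partial>y\<^sub>i\<close> is a root of \<open>q (q + 1) (q + 3)\<close> on them\<close>
  ultimately have "\<forall>i\<in>{0,1,2,3,4}. A4_hamiltonian_partial r i * (A4_hamiltonian_partial r i + 1)
      * (A4_hamiltonian_partial r i + 3) = 0"
    unfolding A4_alt_sum_simps ball_simps A4_hamiltonian_partial_simps by (intro conjI TrueI; algebra)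
  with \<open>j < 5\<close> show ?thesis
    by (elim less_5_cases) (auto simp: add_eq_0_iff2)
qed

lemma A4_hamiltonian_eq:
  "A4_hamiltonian y =
     y 0 * y 1 * y 2 + y 1 * y 2 * y 3 + y 2 * y 3 * y 4 + y 3 * y 4 * y 0 + y 4 * y 0 * y 1"
  by (simp add: A4_hamiltonian_def sum_lessThan_5 numeral_2_eq_2)

lemma fls_nth_mult_add_lower_bounds:
  fixes f g :: "'a::comm_ring_1 fls"
  assumes "a \<le> fls_subdegree f" and "b \<le> fls_subdegree g"
  shows "fls_nth (f * g) (a + b) = fls_nth f a * fls_nth g b"
proof (cases "a = fls_subdegree f \<and> b = fls_subdegree g")
  case False
  then have "a + b < fls_subdegree f + fls_subdegree g" and "fls_nth f a = 0 \<or> fls_nth g b = 0"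
    using assms by auto
  then show ?thesis
    using fls_times_nth_eq0 by fastforce
qed simp

lemma fls_nth_mult_double_lower_bound:
  fixes f g :: "'a::comm_ring_1 fls"
  assumes "d \<le> fls_subdegree f" and "d \<le> fls_subdegree g"
  shows "fls_nth (f * g) (2 * d) = fls_nth f d * fls_nth g d"
  using fls_nth_mult_add_lower_bounds[OF assms] by (simp only: mult_2)

lemma fls_nth_A4_rhs:
  fixes y :: "nat \<Rightarrow> 'a::comm_ring_1 fls"
  assumes "\<forall>i<5. d \<le> fls_subdegree (y i)" and "j < 5" and "d < 0"
  shows "fls_nth (y j * A4_alt_sum y j + fls_const c) (2 * d)
    = fls_nth (y j) d * A4_alt_sum (\<lambda>i. fls_nth (y i) d) j"
  using assms by (simp add: A4_alt_sum_def ring_distribs fls_nth_mult_double_lower_bound)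

lemma fls_nth_A4_hamiltonian_partial:
  fixes y :: "nat \<Rightarrow> 'a::comm_ring_1 fls"
  assumes "\<forall>i<5. d \<le> fls_subdegree (y i)"
  shows "fls_nth (A4_hamiltonian_partial y j) (2 * d)
    = A4_hamiltonian_partial (\<lambda>i. fls_nth (y i) d) j"
  using assms by (simp add: A4_hamiltonian_partial_def fls_nth_mult_double_lower_bound)

lemma fls_deriv_A4_hamiltonian:
  fixes y c :: "nat \<Rightarrow> 'a::comm_ring_1 fls"
  assumes "\<forall>j<5. fls_deriv (y j) = y j * A4_alt_sum y j + c j"
  shows "fls_deriv (A4_hamiltonian y) = (\<Sum>j<5. c j * A4_hamiltonian_partial y j)"
proof -
  have ode: "fls_deriv (y 0) = y 0 * A4_alt_sum y 0 + c 0"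
    "fls_deriv (y 1) = y 1 * A4_alt_sum y 1 + c 1" "fls_deriv (y 2) = y 2 * A4_alt_sum y 2 + c 2"
    "fls_deriv (y 3) = y 3 * A4_alt_sum y 3 + c 3" "fls_deriv (y 4) = y 4 * A4_alt_sum y 4 + c 4"
    by (rule assms[rule_format]; simp)+
  show ?thesis
    unfolding A4_hamiltonian_eq sum_lessThan_5 A4_hamiltonian_partial_simps
    by (simp only: fls_deriv_add fls_deriv_mult ode A4_alt_sum_simps) (simp add: algebra_simps)
qed

lemma A4_fls_subdegree_ge:
  fixes y :: "nat \<Rightarrow> 'a::field_char_0 fls"
  assumes ode: "\<forall>j<5. fls_deriv (y j) = y j * A4_alt_sum y j + fls_const (c j)"
    and sum: "(\<Sum>j<5. y j) = fls_const z + fls_X"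
  shows "\<forall>j<5. -1 \<le> fls_subdegree (y j)"
proof (rule ccontr)
  assume "\<not> (\<forall>j<5. -1 \<le> fls_subdegree (y j))"
  define d where "d = Min ((\<lambda>i. fls_subdegree (y i)) ` {..<5})"
  have d_le: "\<forall>i<5. d \<le> fls_subdegree (y i)"
    by (simp add: d_def)
  have "d \<in> (\<lambda>i. fls_subdegree (y i)) ` {..<5}"
    unfolding d_def by (rule Min_in) (simp_all add: lessThan_empty_iff)
  then obtain m where "m < 5" and m: "fls_subdegree (y m) = d"
    by auto
  from \<open>\<not> (\<forall>j<5. -1 \<le> fls_subdegree (y j))\<close> have "d < -1"
    using d_le by force
  define u where "u = (\<lambda>i. fls_nth (y i) d)"
  have "u i * A4_alt_sum u i = 0" if "i < 5" for i
  proof -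
    have "u i * A4_alt_sum u i = fls_nth (fls_deriv (y i)) (2 * d)"
      using fls_nth_A4_rhs[OF d_le that] \<open>d < -1\<close> ode that by (simp add: u_def)
    also have "\<dots> = 0"
    proof -
      have "2 * d + 1 < fls_subdegree (y i)"
        using d_le that \<open>d < -1\<close> by force
      then show ?thesis by simp
    qed
    finally show ?thesis .
  qed
  moreover have "(\<Sum>i<5. u i) = 0"
    using arg_cong[OF sum, of "\<lambda>F. fls_nth F d"] \<open>d < -1\<close> by (simp add: u_def fls_nth_sum)
  ultimately have "u m = 0"
    using A4_leading_coeffs_eq_0 \<open>m < 5\<close> by blast
  moreover have "y m \<noteq> 0"
    using m \<open>d < -1\<close> by auto
  ultimately show False
    using m nth_fls_subdegree_nonzero by (auto simp: u_def)
qed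

lemma A4_fls_residue_equations:
  fixes y :: "nat \<Rightarrow> 'a::field_char_0 fls"
  assumes ode: "\<forall>j<5. fls_deriv (y j) = y j * A4_alt_sum y j + fls_const (c j)"
    and sum: "(\<Sum>j<5. y j) = fls_const z + fls_X"
  shows "\<forall>j<5. fls_residue (y j) * (1 + A4_alt_sum (\<lambda>i. fls_residue (y i)) j) = 0"
    and "(\<Sum>j<5. fls_residue (y j)) = 0"
proof -
  define r where "r = (\<lambda>i. fls_residue (y i))"
  have bound: "\<forall>i<5. -1 \<le> fls_subdegree (y i)"
    using A4_fls_subdegree_ge[OF ode sum] .
  have "\<forall>j<5. r j * (1 + A4_alt_sum r j) = 0"
  proof (intro allI impI)
    fix j :: nat assume "j < 5"
    have "- r j = fls_nth (fls_deriv (y j)) (2 * -1)"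
      by (simp add: r_def)
    also have "\<dots> = r j * A4_alt_sum r j"
      using fls_nth_A4_rhs[OF bound \<open>j < 5\<close>] ode \<open>j < 5\<close> by (simp add: r_def)
    finally show "r j * (1 + A4_alt_sum r j) = 0"
      unfolding distrib_left mult_1_right by (simp only: neg_eq_iff_add_eq_0)
  qed
  then show "\<forall>j<5. fls_residue (y j) * (1 + A4_alt_sum (\<lambda>i. fls_residue (y i)) j) = 0"
    by (simp only: r_def)
  show "(\<Sum>j<5. fls_residue (y j)) = 0"
    using arg_cong[OF sum, of "\<lambda>F. fls_nth F (-1)"] by (simp add: fls_nth_sum)
qed

lemma A4_fls_hamiltonian_residue:
  fixes y :: "nat \<Rightarrow> 'a::field_char_0 fls"
  assumes ode: "\<forall>j<5. fls_deriv (y j) = y j * A4_alt_sum y j + fls_const (c j)"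
    and sum: "(\<Sum>j<5. y j) = fls_const z + fls_X"
  shows "fls_residue (A4_hamiltonian y) =
    - (\<Sum>j<5. c j * A4_hamiltonian_partial (\<lambda>i. fls_residue (y i)) j)"
proof -
  have "- fls_residue (A4_hamiltonian y) = fls_nth (fls_deriv (A4_hamiltonian y)) (2 * -1)"
    by simp
  also have "\<dots> = (\<Sum>j<5. c j * fls_nth (A4_hamiltonian_partial y j) (2 * -1))"
    by (simp add: fls_deriv_A4_hamiltonian[OF ode] fls_nth_sum)
  also have "\<dots> = (\<Sum>j<5. c j * A4_hamiltonian_partial (\<lambda>i. fls_residue (y i)) j)"
    using fls_nth_A4_hamiltonian_partial[OF A4_fls_subdegree_ge[OF ode sum]] by simp
  finally show ?thesis
    by (metis minus_minus)
qed

lemma A4_fls_hamiltonian_residue_nonneg: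
  fixes y :: "nat \<Rightarrow> complex fls" and \<alpha> :: "nat \<Rightarrow> real"
  assumes ode: "\<forall>j<5. fls_deriv (y j) = y j * A4_alt_sum y j + fls_const (of_real (\<alpha> j))"
    and sum: "(\<Sum>j<5. y j) = fls_const z + fls_X"
    and nonneg: "\<forall>j<5. 0 \<le> \<alpha> j"
  shows "Im (fls_residue (A4_hamiltonian y)) = 0 \<and> 0 \<le> Re (fls_residue (A4_hamiltonian y))"
proof -
  define r where "r = (\<lambda>i. fls_residue (y i))"
  have "A4_hamiltonian_partial r j \<in> {0, -1, -3}" if "j < 5" for j
    unfolding r_def using A4_fls_residue_equations[OF ode sum] that
    by (rule A4_hamiltonian_partial_values)
  then have "Im (- (of_real (\<alpha> j) * A4_hamiltonian_partial r j)) = 0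
      \<and> 0 \<le> Re (- (of_real (\<alpha> j) * A4_hamiltonian_partial r j))" if "j < 5" for j
    using nonneg that by fastforce
  then show ?thesis
    unfolding A4_fls_hamiltonian_residue[OF ode sum] r_def[symmetric] sum_negf[symmetric]
    by (auto simp: Im_sum Re_sum intro!: sum.neutral sum_nonneg)
qed

lemma eventually_not_in_finite_at_infinity:
  fixes A :: "'a::real_normed_vector set"
  assumes "finite A"
  shows "eventually (\<lambda>x. x \<notin> A) at_infinity"
proof -
  obtain b where "\<forall>a\<in>A. norm a \<le> b"
    using finite_imp_bounded[OF assms] bounded_iff by blast
  then show ?thesis
    by (intro eventually_at_infinityI[of "b + 1"]) force
qed

lemma eventually_poly_nonzero_at_infinity:
  fixes q :: "complex poly"
  assumes "q \<noteq> 0"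
  shows "eventually (\<lambda>t. poly q t \<noteq> 0) at_infinity"
  using eventually_not_in_finite_at_infinity[OF poly_roots_finite[OF assms]] by simp

lemma rational_fun_add:
  assumes "rational_fun f" and "rational_fun g"
  shows "rational_fun (\<lambda>t. f t + g t)"
proof -
  obtain p q p' q' where "q \<noteq> 0" "q' \<noteq> 0"
    and "\<forall>t. poly q t \<noteq> 0 \<longrightarrow> f t = poly p t / poly q t"
    and "\<forall>t. poly q' t \<noteq> 0 \<longrightarrow> g t = poly p' t / poly q' t"
    using assms unfolding rational_fun_def by blast
  then have "q * q' \<noteq> 0"
    and "\<forall>t. poly (q * q') t \<noteq> 0 \<longrightarrow> f t + g t = poly (p * q' + p' * q) t / poly (q * q') t"
    by (simp_all add: add_frac_eq)
  then show ?thesis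
    unfolding rational_fun_def by blast
qed

lemma rational_fun_mult:
  assumes "rational_fun f" and "rational_fun g"
  shows "rational_fun (\<lambda>t. f t * g t)"
proof -
  obtain p q p' q' where "q \<noteq> 0" "q' \<noteq> 0"
    and "\<forall>t. poly q t \<noteq> 0 \<longrightarrow> f t = poly p t / poly q t"
    and "\<forall>t. poly q' t \<noteq> 0 \<longrightarrow> g t = poly p' t / poly q' t"
    using assms unfolding rational_fun_def by blast
  then have "q * q' \<noteq> 0"
    and "\<forall>t. poly (q * q') t \<noteq> 0 \<longrightarrow> f t * g t = poly (p * p') t / poly (q * q') t"
    by simp_all
  then show ?thesis
    unfolding rational_fun_def by blast
qed

lemma rational_fun_sum:
  assumes "finite J" and "\<And>j. j \<in> J \<Longrightarrow> rational_fun (g j)"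
  shows "rational_fun (\<lambda>t. \<Sum>j\<in>J. g j t)"
  using assms
proof (induction J rule: finite_induct)
  case empty
  have "rational_fun (\<lambda>t. poly 0 t / poly 1 t)"
    unfolding rational_fun_def by (metis one_neq_zero)
  then show ?case by simp
next
  case (insert j J)
  then show ?case
    by (simp add: rational_fun_add)
qed

lemma rational_fun_holomorphic:
  assumes "rational_fun g"
  obtains P where "finite P" and "g holomorphic_on - P"
proof -
  obtain p q where q: "q \<noteq> 0" and g: "\<forall>t. poly q t \<noteq> 0 \<longrightarrow> g t = poly p t / poly q t"
    using assms unfolding rational_fun_def by blast
  have "(\<lambda>t. poly p t / poly q t) holomorphic_on - {t. poly q t = 0}"
    by (intro holomorphic_intros) auto
  then have "g holomorphic_on - {t. poly q t = 0}"
    by (rule holomorphic_transform) (use g in auto)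
  with poly_roots_finite[OF q] show ?thesis
    using that by blast
qed

lemma rational_fun_has_laurent_expansion:
  assumes "rational_fun g"
  obtains F where "(\<lambda>x. g (z + x)) has_laurent_expansion F"
proof -
  obtain p q where q: "q \<noteq> 0" and g: "\<forall>t. poly q t \<noteq> 0 \<longrightarrow> g t = poly p t / poly q t"
    using assms unfolding rational_fun_def by blast
  have poly_expansion:
    "(\<lambda>x. poly r (z + x)) has_laurent_expansion fps_to_fls (fps_expansion (poly r) z)"
    for r :: "complex poly"
    by (intro has_laurent_expansion_fps analytic_at_imp_has_fps_expansion
        holomorphic_on_imp_analytic_at[of _ UNIV] holomorphic_intros) auto
  have "eventually (\<lambda>x. x \<notin> {t. poly q t = 0}) (at z)"
    using islimpt_finite[OF poly_roots_finite[OF q]] islimpt_iff_eventually by blast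
  then have ev: "eventually (\<lambda>x. poly p x / poly q x = g x) (at z)"
    by eventually_elim (use g in auto)
  have "(\<lambda>x. poly p (z + x) / poly q (z + x)) has_laurent_expansion
      fps_to_fls (fps_expansion (poly p) z) / fps_to_fls (fps_expansion (poly q) z)"
    by (intro has_laurent_expansion_divide poly_expansion)
  then show ?thesis
    using that has_laurent_expansion_cong'[OF ev refl refl] by blast
qed

lemma poly_divide_tendsto_at_infinity:
  fixes p q :: "'a::real_normed_field poly"
  assumes "q \<noteq> 0" and "degree p \<le> degree q"
  obtains c where "((\<lambda>t. poly p t / poly q t) \<longlongrightarrow> c) at_infinity"
proof (cases "degree p < degree q")
  case True
  then show ?thesis
    by (rule that[OF poly_divide_tendsto_0_at_infinity])
next
  case False
  then have "degree p = degree q"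
    using assms(2) by simp
  then have "((\<lambda>t. poly p t / t ^ degree q) \<longlongrightarrow> lead_coeff p) at_infinity"
    using poly_divide_tendsto_aux[of p] by simp
  then have lim: "((\<lambda>t. (poly p t / t ^ degree q) / (poly q t / t ^ degree q))
      \<longlongrightarrow> lead_coeff p / lead_coeff q) at_infinity"
    using assms(1) by (intro tendsto_divide poly_divide_tendsto_aux) simp_all
  have "eventually (\<lambda>t::'a. t \<noteq> 0) at_infinity"
    using eventually_not_in_finite_at_infinity[of "{0}"] by simp
  then have "eventually (\<lambda>t. (poly p t / t ^ degree q) / (poly q t / t ^ degree q)
      = poly p t / poly q t) at_infinity"
    by (rule eventually_mono) simp
  then show ?thesis
    using lim by (intro that) (rule tendsto_cong[THEN iffD1])
qed

lemma rational_fun_tendsto_at_infinity: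
  assumes "rational_fun R"
  obtains p c where "((\<lambda>t. t * (R t - poly p t)) \<longlongrightarrow> c) at_infinity"
proof -
  obtain A B where B: "B \<noteq> 0" and R: "\<forall>t. poly B t \<noteq> 0 \<longrightarrow> R t = poly A t / poly B t"
    using assms unfolding rational_fun_def by blast
  define r where "r = pCons 0 (A mod B)"
  have "eventually (\<lambda>t. t * (R t - poly (A div B) t) = poly r t / poly B t) at_infinity"
    using eventually_poly_nonzero_at_infinity[OF B]
  proof eventually_elim
    case (elim t)
    have "poly A t = poly (A div B) t * poly B t + poly (A mod B) t"
      by (metis div_mult_mod_eq poly_add poly_mult)
    then show ?case
      using elim R by (simp add: r_def field_simps)
  qed
  moreover have "degree r \<le> degree B"
    using degree_mod_less[OF B, of A] by (cases "A mod B = 0") (auto simp: r_def)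
  ultimately show ?thesis
    by (metis that poly_divide_tendsto_at_infinity[OF B] tendsto_cong)
qed

lemma laurent_inf_coeff_m1_eqI:
  assumes lim: "((\<lambda>t. t * (R t - poly p t)) \<longlongrightarrow> c) at_infinity"
  shows "laurent_inf_coeff_m1 R = c"
  unfolding laurent_inf_coeff_m1_def
proof (rule the_equality)
  show "\<exists>p. ((\<lambda>t. t * (R t - poly p t)) \<longlongrightarrow> c) at_infinity"
    using lim by blast
next
  fix c' assume "\<exists>p. ((\<lambda>t. t * (R t - poly p t)) \<longlongrightarrow> c') at_infinity"
  then obtain p' where lim': "((\<lambda>t. t * (R t - poly p' t)) \<longlongrightarrow> c') at_infinity"
    by blast
  have "(\<lambda>t. t * (R t - poly p' t) - t * (R t - poly p t)) = poly (pCons 0 (p - p'))"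
    by (simp add: fun_eq_iff algebra_simps)
  then have poly_lim: "(poly (pCons 0 (p - p')) \<longlongrightarrow> c' - c) at_infinity"
    using tendsto_diff[OF lim' lim] by simp
  have "p - p' = 0"
  proof (rule ccontr)
    assume "p - p' \<noteq> 0"
    then have "filterlim (poly (pCons 0 (p - p'))) at_infinity at_infinity"
      by (intro filterlim_poly_at_infinity) simp
    then show False
      using not_tendsto_and_filterlim_at_infinity[OF trivial_limit_at_infinity poly_lim] by blast
  qed
  with lim lim' show "c' = c"
    using tendsto_unique[OF trivial_limit_at_infinity] by simp
qed

lemma has_contour_integral_circlepath_sum_residues:
  fixes H :: "complex \<Rightarrow> complex"
  assumes holo: "H holomorphic_on - P" and "finite P" and "P \<subseteq> ball 0 r"
  shows "(H has_contour_integral 2 * pi * \<i> * (\<Sum>w\<in>P. residue H w)) (circlepath 0 r)"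
proof -
  have sphere: "path_image (circlepath 0 r) \<subseteq> - P"
    using assms(3) path_image_circlepath_minus_subset by fastforce
  have "contour_integral (circlepath 0 r) H
      = 2 * pi * \<i> * (\<Sum>w\<in>P. winding_number (circlepath 0 r) w * residue H w)"
    by (rule Residue_theorem[of UNIV P H]) (use assms sphere in \<open>auto simp: Compl_eq_Diff_UNIV\<close>)
  also have "\<dots> = 2 * pi * \<i> * (\<Sum>w\<in>P. residue H w)"
    using assms(3)
    by (intro arg_cong[where f = "(*) _"] sum.cong) (auto simp: winding_number_circlepath)
  finally have "contour_integral (circlepath 0 r) H = 2 * pi * \<i> * (\<Sum>w\<in>P. residue H w)" .
  moreover have "H contour_integrable_on circlepath 0 r"
    by (rule contour_integrable_holomorphic_simple[OF holo])
      (use sphere \<open>finite P\<close> in \<open>auto intro: finite_imp_closed\<close>)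
  ultimately show ?thesis
    by (metis has_contour_integral_integral)
qed

lemma sum_residues_eq_limit_at_infinity:
  fixes H :: "complex \<Rightarrow> complex"
  assumes holo: "H holomorphic_on - P" and "finite P"
    and lim: "((\<lambda>t. t * (H t - poly p t)) \<longlongrightarrow> c) at_infinity"
  shows "(\<Sum>w\<in>P. residue H w) = c"
proof -
  define K where "K = (\<Sum>w\<in>P. residue H w)"
  obtain R where "0 < R" and R: "P \<subseteq> ball 0 R"
    using bounded_subset_ballD[OF finite_imp_bounded[OF \<open>finite P\<close>]] by blast
  have "norm (K - c) \<le> e" if "e > 0" for e
  proof -
    obtain b where b: "\<And>t. b \<le> norm t \<Longrightarrow> norm (t * (H t - poly p t) - c) < e"
      using tendstoD[OF lim \<open>e > 0\<close>] unfolding eventually_at_infinity dist_norm by blast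
    define r where "r = max R b"
    have "0 < r" "b \<le> r" and "P \<subseteq> ball 0 r"
      using \<open>0 < R\<close> R by (auto simp: r_def)
    have "((\<lambda>u. H u - poly p u - c / (u - 0)) has_contour_integral
        2 * pi * \<i> * K - 0 - 2 * of_real pi * \<i> * c) (circlepath 0 r)"
    proof (intro has_contour_integral_diff)
      show "(H has_contour_integral 2 * pi * \<i> * K) (circlepath 0 r)"
        unfolding K_def by (rule has_contour_integral_circlepath_sum_residues) fact+
      show "(poly p has_contour_integral 0) (circlepath 0 r)"
        by (rule Cauchy_theorem_convex_simple[of _ UNIV]) (auto intro: holomorphic_intros)
      show "((\<lambda>u. c / (u - 0)) has_contour_integral 2 * of_real pi * \<i> * c) (circlepath 0 r)"
        using Cauchy_integral_circlepath_simple[of "\<lambda>_. c" 0 r 0] \<open>0 < r\<close> by simp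
    qed
    moreover have "norm (H u - poly p u - c / (u - 0)) \<le> e / r" if "norm (u - 0) = r" for u
    proof -
      have "u \<noteq> 0"
        using that \<open>0 < r\<close> by auto
      then have "H u - poly p u - c / (u - 0) = (u * (H u - poly p u) - c) / u"
        by (simp add: field_simps)
      then show ?thesis
        using b[of u] that \<open>b \<le> r\<close> \<open>0 < r\<close> by (simp add: norm_divide divide_right_mono)
    qed
    ultimately have "norm (2 * pi * \<i> * K - 0 - 2 * of_real pi * \<i> * c) \<le> e / r * (2 * pi * r)"
      using \<open>0 < r\<close> \<open>e > 0\<close> by (intro has_contour_integral_bound_circlepath) auto
    moreover have "2 * pi * \<i> * K - 0 - 2 * of_real pi * \<i> * c = (2 * pi * \<i>) * (K - c)"
      by (simp add: algebra_simps)
    ultimately show ?thesis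
      using \<open>0 < r\<close> by (simp add: norm_mult)
  qed
  then have "norm (K - c) \<le> 0"
    by (rule field_le_epsilon) simp
  then show ?thesis
    by (simp add: K_def)
qed

lemma A4_solution_laurent_system:
  assumes "A4_rational_solution \<alpha> f"
  obtains L where "\<forall>j<5. (\<lambda>x. f j (z + x)) has_laurent_expansion L j"
    and "\<forall>j<5. fls_deriv (L j) = L j * A4_alt_sum L j + fls_const (of_real (\<alpha> j))"
    and "(\<Sum>j<5. L j) = fls_const z + fls_X"
proof -
  obtain F where rat: "\<forall>j<5. rational_fun (f j)" and "finite F"
    and ode: "\<And>t j. t \<notin> F \<Longrightarrow> j < 5 \<Longrightarrow>
      (f j has_field_derivative f j t * A4_alt_sum (\<lambda>i. f i t) j + of_real (\<alpha> j)) (at t)"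
    and sum: "\<And>t. t \<notin> F \<Longrightarrow> (\<Sum>j<5. f j t) = t"
    using assms unfolding A4_rational_solution_def A4_alt_sum_def by blast
  have "\<forall>j<5. \<exists>F. (\<lambda>x. f j (z + x)) has_laurent_expansion F"
    using rat rational_fun_has_laurent_expansion by metis
  then obtain L where L: "\<forall>j<5. (\<lambda>x. f j (z + x)) has_laurent_expansion L j"
    by (auto simp: choice_iff')
  define A where "A = - ((\<lambda>t. t - z) ` F - {0})"
  have "open A"
    unfolding A_def using \<open>finite F\<close> by (intro open_Compl finite_imp_closed) auto
  have "0 \<in> A"
    by (simp add: A_def)
  have A: "z + x \<notin> F" if "x \<in> A - {0}" for x
    using that by (force simp: A_def)
  have "fls_deriv (L j) = L j * A4_alt_sum L j + fls_const (of_real (\<alpha> j))" if "j < 5" for j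
  proof -
    have "(\<lambda>x. f j (z + x) * A4_alt_sum (\<lambda>i. f i (z + x)) j + of_real (\<alpha> j))
        has_laurent_expansion fls_deriv (L j)"
    proof (rule has_laurent_expansion_deriv'[OF L[rule_format, OF that] \<open>open A\<close> \<open>0 \<in> A\<close>])
      fix x assume "x \<in> A - {0}"
      then have "(f j has_field_derivative
          f j (z + x) * A4_alt_sum (\<lambda>i. f i (z + x)) j + of_real (\<alpha> j)) (at (x + z))"
        using ode[OF A \<open>j < 5\<close>] by (simp add: add.commute)
      then have "((\<lambda>x. f j (x + z)) has_field_derivative
          f j (z + x) * A4_alt_sum (\<lambda>i. f i (z + x)) j + of_real (\<alpha> j)) (at x)"
        by (rule DERIV_shift[THEN iffD1])
      then show "((\<lambda>x. f j (z + x)) has_field_derivative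
          f j (z + x) * A4_alt_sum (\<lambda>i. f i (z + x)) j + of_real (\<alpha> j)) (at x)"
        by (simp only: add.commute)
    qed
    moreover have "(\<lambda>x. f j (z + x) * A4_alt_sum (\<lambda>i. f i (z + x)) j + of_real (\<alpha> j))
        has_laurent_expansion L j * A4_alt_sum L j + fls_const (of_real (\<alpha> j))"
      unfolding A4_alt_sum_def using L that by (intro laurent_expansion_intros) auto
    ultimately show ?thesis
      by (rule has_laurent_expansion_unique)
  qed
  moreover have "(\<Sum>j<5. L j) = fls_const z + fls_X"
  proof -
    have "eventually (\<lambda>x. x \<in> A - {0}) (at 0)"
      using eventually_at_in_open[OF \<open>open A\<close> \<open>0 \<in> A\<close>] .
    then have "eventually (\<lambda>x. z + x = (\<Sum>j<5. f j (z + x))) (at 0)"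
      by eventually_elim (simp add: A sum)
    moreover have "(\<lambda>x. z + x) has_laurent_expansion fls_const z + fls_X"
      by (intro laurent_expansion_intros)
    ultimately have "(\<lambda>x. \<Sum>j<5. f j (z + x)) has_laurent_expansion fls_const z + fls_X"
      by (rule has_laurent_expansion_cong[OF _ refl, THEN iffD1])
    moreover have "(\<lambda>x. \<Sum>j<5. f j (z + x)) has_laurent_expansion (\<Sum>j<5. L j)"
      using L by (intro has_laurent_expansion_sum) auto
    ultimately show ?thesis
      by (rule has_laurent_expansion_unique[rotated])
  qed
  ultimately show ?thesis
    using that L by blast
qed

lemma A4_H_residue_nonneg:
  assumes "\<forall>i<5. 0 \<le> \<alpha> i" and "A4_rational_solution \<alpha> f"
  shows "Im (residue (A4_H f) z) = 0 \<and> 0 \<le> Re (residue (A4_H f) z)"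
proof -
  obtain L where L: "\<forall>j<5. (\<lambda>x. f j (z + x)) has_laurent_expansion L j"
    and ode: "\<forall>j<5. fls_deriv (L j) = L j * A4_alt_sum L j + fls_const (of_real (\<alpha> j))"
    and sum: "(\<Sum>j<5. L j) = fls_const z + fls_X"
    using A4_solution_laurent_system[OF assms(2)] by blast
  have "(\<lambda>x. A4_H f (z + x)) has_laurent_expansion A4_hamiltonian L"
    unfolding A4_H_def A4_hamiltonian_def using L by (intro laurent_expansion_intros) auto
  then have "residue (A4_H f) z = fls_residue (A4_hamiltonian L)"
    by (rule has_laurent_expansion_residue)
  then show ?thesis
    using A4_fls_hamiltonian_residue_nonneg[OF ode sum assms(1)] by simp
qed

theorem lemma3p3:
  fixes \<alpha> :: "nat \<Rightarrow> real" and f :: "nat \<Rightarrow> complex \<Rightarrow> complex"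
  assumes "\<forall>i<5. 0 \<le> \<alpha> i \<and> \<alpha> i \<le> 1"
    and "(\<Sum>i<5. \<alpha> i) = 1"
    and "A4_rational_solution \<alpha> f"
  shows "Im (laurent_inf_coeff_m1 (A4_H f)) = 0 \<and> Re (laurent_inf_coeff_m1 (A4_H f)) \<ge> 0"
proof -
  \<comment> \<open>only \<open>\<alpha>\<^sub>i \<ge> 0\<close> is needed\<close>
  have nonneg: "\<forall>i<5. 0 \<le> \<alpha> i"
    using assms(1) by blast
  have "\<forall>j<5. rational_fun (f j)"
    using assms(3) unfolding A4_rational_solution_def by blast
  moreover have "A4_H f = (\<lambda>t. \<Sum>j<5. f j t * f ((j+1) mod 5) t * f ((j+2) mod 5) t)"
    by (simp add: fun_eq_iff A4_H_def)
  ultimately have rational: "rational_fun (A4_H f)"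
    by (auto intro!: rational_fun_sum rational_fun_mult)
  obtain P where "finite P" and holo: "A4_H f holomorphic_on - P"
    using rational_fun_holomorphic[OF rational] by blast
  obtain p c where lim: "((\<lambda>t. t * (A4_H f t - poly p t)) \<longlongrightarrow> c) at_infinity"
    using rational_fun_tendsto_at_infinity[OF rational] by blast
  have "laurent_inf_coeff_m1 (A4_H f) = (\<Sum>w\<in>P. residue (A4_H f) w)"
    using laurent_inf_coeff_m1_eqI[OF lim]
      sum_residues_eq_limit_at_infinity[OF holo \<open>finite P\<close> lim] by simp
  then show ?thesis
    using A4_H_residue_nonneg[OF nonneg assms(3)] by (simp add: Im_sum Re_sum sum_nonneg)
qed

end
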